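(* There exists an atomic Puiseux monoid $M$ such that the monoid algebra $\mathbb{Z}_2[x;M]$ is not atomic.
   Context: $\mathbb{Z}_2$ denotes the field with two elements. A Puiseux monoid is a submonoid of $(\mathbb{Q}_{\ge 0}, +)$. An atom of $M$ is a nonzero element $a$ such that $a = x+y$ with $x,y\in M$ implies $x=0$ or $y=0$; $M$ is atomic if every nonzero element is a finite sum of atoms. $\mathbb{Z}_2[x;M]$ is the ring of finitely supported functions $M \to \mathbb{Z}_2$ (written $\sum_s f(s)x^s$) with convolution product, an integral domain; it is atomic if every nonzero nonunit is a finite product of irreducible elements. *)

theory Defs
  imports Complex_Main "HOL-Library.Z2" "HOL-Library.Poly_Mapping"
begin

definition puiseux_monoid :: "rat set \<Rightarrow> bool" where
  "puiseux_monoid M \<longleftrightarrow> M \<subseteq> {q. 0 \<le> q} \<and> 0 \<in> M \<and> (\<forall>x\<in>M. \<forall>y\<in>M. x + y \<in> M)"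

definition monoid_atom :: "rat set \<Rightarrow> rat \<Rightarrow> bool" where
  "monoid_atom M a \<longleftrightarrow> a \<in> M \<and> a \<noteq> 0 \<and>
     (\<forall>x\<in>M. \<forall>y\<in>M. a = x + y \<longrightarrow> x = 0 \<or> y = 0)"

definition atomic_monoid :: "rat set \<Rightarrow> bool" where
  "atomic_monoid M \<longleftrightarrow> (\<forall>b\<in>M. b \<noteq> 0 \<longrightarrow>
     (\<exists>as. as \<noteq> [] \<and> (\<forall>a\<in>set as. monoid_atom M a) \<and> sum_list as = b))"

text \<open>The monoid algebra Z_2[x;M], realised inside the group algebra
  the type of finitely supported functions with convolution product)
  as the subring of elements supported in M.\<close>
definition monoid_algebra :: "rat set \<Rightarrow> (rat \<Rightarrow>\<^sub>0 bit) set" where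
  "monoid_algebra M = {f. Poly_Mapping.keys f \<subseteq> M}"

definition ma_unit :: "rat set \<Rightarrow> (rat \<Rightarrow>\<^sub>0 bit) \<Rightarrow> bool" where
  "ma_unit M f \<longleftrightarrow> f \<in> monoid_algebra M \<and> (\<exists>g\<in>monoid_algebra M. f * g = 1)"

definition ma_irreducible :: "rat set \<Rightarrow> (rat \<Rightarrow>\<^sub>0 bit) \<Rightarrow> bool" where
  "ma_irreducible M f \<longleftrightarrow> f \<in> monoid_algebra M \<and> f \<noteq> 0 \<and> \<not> ma_unit M f \<and>
     (\<forall>g\<in>monoid_algebra M. \<forall>h\<in>monoid_algebra M. f = g * h \<longrightarrow> ma_unit M g \<or> ma_unit M h)"

definition ma_atomic :: "rat set \<Rightarrow> bool" where
  "ma_atomic M \<longleftrightarrow> (\<forall>f\<in>monoid_algebra M. f \<noteq> 0 \<and> \<not> ma_unit M f \<longrightarrow>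
     (\<exists>fs. fs \<noteq> [] \<and> (\<forall>g\<in>set fs. ma_irreducible M g) \<and> prod_list fs = f))"

end

(*
  The monoid is generated by the rationals g(k,+-) = 2^-(k+1) +- e_k for k >= 1, where e_k is a
  tiny rational congruent to 3^-k modulo the dyadic rationals Z[1/2]. As g(k,+) + g(k,-) = 2^-k,
  it contains every non-negative dyadic rational, and comparing sizes and 3-adic parts shows that
  each g(k,+-) is an atom.

  In Z_2[x;M] take T = 1 + x + x^2. On exponents in (1/6^c) N the substitution x^s |-> X^(s 6^c)
  is a ring homomorphism to F_2[X] sending T to Phi^(2^c), where Phi = 1 + X^(3^c) + X^(2 3^c)
  is the cyclotomic polynomial of order 3^(c+1); it is irreducible over F_2 because 2 is a
  primitive root modulo 3^(c+1). Hence every divisor of T has dyadic exponents only and is the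
  square of its image under x^s |-> x^(s/2), so the non-unit T has no irreducible factor.
*)

theory Submission
  imports Defs
    "Berlekamp_Zassenhaus.Distinct_Degree_Factorization"
    "HOL-Number_Theory.Residue_Primitive_Roots"
begin

(* HOL-Algebra, loaded with the primitive-root theory, has its own monom and coeff. *)
hide_const (open) UnivPoly.monom UnivPoly.coeff

section \<open>Multiplicative orders\<close>

lemma ord_three_pow_two: "ord (3 ^ Suc b) (2::nat) = 2 * 3 ^ b"
proof -
  have "ord 3 (2::nat) dvd 2" "\<not> ord 3 (2::nat) dvd 1"
    unfolding ord_divides[symmetric] by (simp_all add: cong_def)
  moreover from this(1) have "ord 3 (2::nat) \<le> 2" by (rule dvd_imp_le) simp
  ultimately have "ord 3 (2::nat) = 2"
    by (metis One_nat_def dvd_0_left_iff dvd_1_left le_Suc_eq le_zero_eq numeral_2_eq_2 zero_neq_numeral)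
  hence "residue_primroot 3 2" by (simp add: residue_primroot_def totient_prime)
  moreover have "[(2::nat) ^ (3 - 1) \<noteq> 1] (mod 3\<^sup>2)" by (simp add: cong_def)
  ultimately have "\<forall>k>0. residue_primroot (3 ^ k) 2"
    using residue_primroot_prime_lift_iff[of 3 2] by simp
  hence "ord (3 ^ Suc b) (2::nat) = totient (3 ^ Suc b)"
    unfolding residue_primroot_def by blast
  also have "\<dots> = 2 * 3 ^ b"
    using totient_prime_power_Suc[of 3 b] by simp
  finally show ?thesis .
qed

lemma two_pow_cong_one_mod_three_pow:
  assumes "[(2::nat) ^ d = 1] (mod 3 ^ Suc b)"
  shows "2 * 3 ^ b dvd d"
  using assms unfolding ord_divides ord_three_pow_two .

lemma cong_pow_gcd_eq_one:
  fixes x m :: "'a::unique_euclidean_semiring"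
  assumes E: "[x ^ E = 1] (mod m)" and F: "[x ^ F = 1] (mod m)"
  shows "[x ^ gcd E F = 1] (mod m)"
proof (cases "F = 0")
  case False
  then obtain u v where uv: "F * u = E * v + gcd F E" using bezout_nat by blast
  have "[x ^ (E * v) * x ^ gcd F E = x ^ (F * u)] (mod m)" by (simp add: uv power_add)
  also have "[x ^ (F * u) = 1] (mod m)" using cong_pow[OF F, of u] by (simp add: power_mult)
  finally have "[x ^ (E * v) * x ^ gcd F E = 1] (mod m)" .
  moreover have "[x ^ (E * v) * x ^ gcd F E = 1 * x ^ gcd F E] (mod m)"
    using cong_pow[OF E, of v] by (intro cong_scalar_right) (simp add: power_mult)
  ultimately show ?thesis by (metis cong_sym cong_trans gcd.commute mult_1)
qed (use E in simp)

lemma prime_power_dvd_if_cong_pow_eq_one: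
  fixes x m :: "'a::unique_euclidean_semiring"
  assumes p: "prime p"
    and order_dvd: "[x ^ (p ^ Suc b) = 1] (mod m)"
    and order_not_dvd: "\<not> [x ^ (p ^ b) = 1] (mod m)"
    and "[x ^ n = 1] (mod m)"
  shows "p ^ Suc b dvd n"
proof (rule ccontr)
  assume not_dvd: "\<not> p ^ Suc b dvd n"
  obtain i where i: "i \<le> Suc b" "gcd n (p ^ Suc b) = p ^ i"
    using divides_primepow_nat[OF p, of "gcd n (p ^ Suc b)" "Suc b"] by auto
  have "i \<noteq> Suc b" using i(2) not_dvd by (metis gcd_dvd1)
  with i(1) have "p ^ i dvd p ^ b" by (simp add: le_imp_power_dvd)
  then obtain k where k: "p ^ b = p ^ i * k" by blast
  have "[x ^ (p ^ i) = 1] (mod m)"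
    using cong_pow_gcd_eq_one[OF \<open>[x ^ n = 1] (mod m)\<close> order_dvd] i(2) by simp
  from cong_pow[OF this, of k] have "[x ^ (p ^ b) = 1] (mod m)"
    by (simp add: k power_mult)
  with order_not_dvd show False by contradiction
qed

lemma cong_pow_eq_one_if_pow_Suc_eq_self:
  fixes x m :: "'a::unique_euclidean_semiring"
  assumes Suc: "[x ^ Suc n = x] (mod m)" and F: "[x ^ F = 1] (mod m)" and "F > 0"
  shows "[x ^ n = 1] (mod m)"
proof -
  obtain G where G: "F = Suc G" using \<open>F > 0\<close> by (cases F) auto
  have "[x ^ n = x ^ n * x ^ F] (mod m)"
    using cong_scalar_left[OF F, of "x ^ n"] by (simp add: cong_sym)
  also have "x ^ n * x ^ F = x ^ Suc n * x ^ G" by (simp add: G ac_simps)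
  also have "[x ^ Suc n * x ^ G = x * x ^ G] (mod m)" using Suc by (rule cong_scalar_right)
  also have "x * x ^ G = x ^ F" by (simp add: G)
  finally show ?thesis using F by (rule cong_trans)
qed

section \<open>Cyclotomic polynomials of order \<open>3\<^sup>k\<close> over \<open>F\<^sub>2\<close>\<close>

lemma square_add_char_two:
  fixes x y :: "'a::comm_ring_1"
  assumes "(2::'a) = 0"
  shows "(x + y) ^ 2 = x ^ 2 + y ^ 2"
proof -
  have "(x + y) ^ 2 = x ^ 2 + y ^ 2 + 2 * (x * y)" by (simp add: power2_eq_square algebra_simps)
  with assms show ?thesis by simp
qed

lemma sum_square_char_two:
  fixes f :: "'b \<Rightarrow> 'a::comm_ring_1"
  assumes "(2::'a) = 0"
  shows "(sum f A) ^ 2 = (\<Sum>x\<in>A. f x ^ 2)"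
  by (induction A rule: infinite_finite_induct) (simp_all add: square_add_char_two[OF assms])

type_synonym gf2 = "bool mod_ring"

lemma gf2_two_eq_zero: "(2::gf2) = 0"
  using of_nat_card_eq_0[where 'a = bool] by simp

lemma gf2_poly_two_eq_zero: "(2::gf2 poly) = 0"
  by (simp add: numeral_poly gf2_two_eq_zero)

text \<open>The cyclotomic polynomial of order \<open>3 ^ Suc b\<close>, reduced mod 2.\<close>

definition cyclotomic_3pow :: "nat \<Rightarrow> gf2 poly" where
  "cyclotomic_3pow b = 1 + monom 1 (3 ^ b) + monom 1 (2 * 3 ^ b)"

lemma degree_cyclotomic_3pow: "degree (cyclotomic_3pow b) = 2 * 3 ^ b"
  and lead_coeff_cyclotomic_3pow: "lead_coeff (cyclotomic_3pow b) = 1"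
proof -
  have "degree (1 + monom (1::gf2) (3 ^ b)) \<le> 3 ^ b"
    by (rule degree_add_le) (simp_all add: degree_monom_le)
  moreover have "(3::nat) ^ b < 2 * 3 ^ b" by simp
  ultimately have "degree (1 + monom (1::gf2) (3 ^ b)) < 2 * 3 ^ b" by (rule le_less_trans)
  moreover have "cyclotomic_3pow b = monom 1 (2 * 3 ^ b) + (1 + monom 1 (3 ^ b))"
    by (simp add: cyclotomic_3pow_def algebra_simps)
  ultimately show "degree (cyclotomic_3pow b) = 2 * 3 ^ b"
    and "lead_coeff (cyclotomic_3pow b) = 1"
    by (simp_all add: degree_add_eq_left degree_monom_eq coeff_monom)
qed

lemma cyclotomic_3pow_dvd: "cyclotomic_3pow b dvd monom 1 (3 ^ Suc b) - 1"
proof -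
  define y :: "gf2 poly" where "y = monom 1 (3 ^ b)"
  have "monom 1 (2 * 3 ^ b) = y ^ 2" "monom 1 (3 ^ Suc b) = y ^ 3"
    by (simp_all add: y_def monom_power mult.commute)
  hence "monom 1 (3 ^ Suc b) - 1 = cyclotomic_3pow b * (y - 1)"
    by (simp add: cyclotomic_3pow_def y_def[symmetric] algebra_simps power2_eq_square power3_eq_cube)
  thus ?thesis by simp
qed

text \<open>The multiplicative order of \<open>X\<close> modulo an irreducible factor \<open>\<psi>\<close> is \<open>3 ^ Suc b\<close>,
  and it divides \<open>2 ^ degree \<psi> - 1\<close> because \<open>F\<^sub>2[X]/\<psi>\<close> is a field with
  \<open>2 ^ degree \<psi>\<close> elements.\<close>

lemma degree_irreducible_factor_cyclotomic_3pow:
  assumes irr: "irreducible \<psi>" and dvd: "\<psi> dvd cyclotomic_3pow b"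
  shows "2 * 3 ^ b \<le> degree \<psi>"
proof -
  define X :: "gf2 poly" where "X = monom 1 1"
  define d where "d = degree \<psi>"
  have "\<psi> \<noteq> 0" "\<not> is_unit \<psi>" using irr by (auto simp: irreducible_def)
  hence "d > 0" by (simp add: d_def is_unit_iff_degree)
  have X_pow: "X ^ n = monom 1 n" for n by (simp add: X_def monom_power)
  have "\<psi> dvd X ^ (2 ^ d) - X"
    using degree_divisor1[OF irr d_def[symmetric]] by (simp add: X_def)
  moreover have "Suc (2 ^ d - 1) = 2 ^ d" by simp
  ultimately have frobenius: "[X ^ Suc (2 ^ d - 1) = X] (mod \<psi>)"
    by (simp add: cong_iff_dvd_diff)
  have "\<psi> dvd X ^ (3 ^ Suc b) - 1"
    using dvd_trans[OF dvd cyclotomic_3pow_dvd] by (simp only: X_pow)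
  hence root_of_unity: "[X ^ (3 ^ Suc b) = 1] (mod \<psi>)" by (simp add: cong_iff_dvd_diff)
  have primitive: "\<not> [X ^ (3 ^ b) = 1] (mod \<psi>)"
  proof
    assume "[X ^ (3 ^ b) = 1] (mod \<psi>)"
    hence "[1 + X ^ (3 ^ b) + (X ^ (3 ^ b)) ^ 2 = 1 + 1 + 1 ^ 2] (mod \<psi>)"
      by (intro cong_add cong_refl cong_pow)
    moreover have "1 + X ^ (3 ^ b) + (X ^ (3 ^ b)) ^ 2 = cyclotomic_3pow b"
      by (simp add: cyclotomic_3pow_def X_pow[symmetric] power_mult[symmetric] mult.commute)
    moreover have "(1 + 1 + 1 ^ 2 :: gf2 poly) = 2 + 1" by simp
    moreover have "(2 + 1 :: gf2 poly) = 1" by (simp only: gf2_poly_two_eq_zero add_0)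
    moreover have "[cyclotomic_3pow b = 0] (mod \<psi>)" using dvd by (simp add: cong_0_iff)
    ultimately have "[1 = 0] (mod \<psi>)" by (metis cong_sym cong_trans)
    with \<open>\<not> is_unit \<psi>\<close> show False by (simp add: cong_0_iff cong_sym_eq)
  qed
  have unity: "[X ^ (2 ^ d - 1) = 1] (mod \<psi>)"
    using frobenius root_of_unity by (rule cong_pow_eq_one_if_pow_Suc_eq_self) simp
  have "(3::nat) ^ Suc b dvd 2 ^ d - 1"
    by (rule prime_power_dvd_if_cong_pow_eq_one[OF _ root_of_unity primitive unity]) simp
  hence "[(2::nat) ^ d = 1] (mod 3 ^ Suc b)" by (simp add: cong_altdef_nat)
  hence "2 * 3 ^ b dvd d" by (rule two_pow_cong_one_mod_three_pow)
  with \<open>d > 0\<close> show ?thesis by (simp add: d_def dvd_imp_le)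
qed

lemma irreducible_cyclotomic_3pow: "irreducible (cyclotomic_3pow b)"
proof (rule irreducibleI)
  show nonzero: "cyclotomic_3pow b \<noteq> 0"
    using lead_coeff_cyclotomic_3pow[of b] by auto
  show "\<not> is_unit (cyclotomic_3pow b)"
    using degree_cyclotomic_3pow[of b] by (simp add: is_unit_iff_degree nonzero)
  fix a c assume ac: "cyclotomic_3pow b = a * c"
  show "is_unit a \<or> is_unit c"
  proof (rule ccontr)
    assume "\<not> (is_unit a \<or> is_unit c)"
    moreover have "a \<noteq> 0" "c \<noteq> 0" using ac nonzero by auto
    ultimately have "degree c > 0" and "\<not> is_unit a" by (auto simp: is_unit_iff_degree)
    then obtain p where p: "prime p" "p dvd a" using prime_divisor_exists[OF \<open>a \<noteq> 0\<close>] by blast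
    have "irreducible p" using p(1) prime_elem_imp_irreducible prime_imp_prime_elem by blast
    moreover have "p dvd cyclotomic_3pow b" using p(2) ac by simp
    ultimately have "2 * 3 ^ b \<le> degree p" by (rule degree_irreducible_factor_cyclotomic_3pow)
    also have "degree p \<le> degree a" using p(2) \<open>a \<noteq> 0\<close> by (rule dvd_imp_degree_le)
    also have "degree a < degree (cyclotomic_3pow b)"
      using ac \<open>a \<noteq> 0\<close> \<open>c \<noteq> 0\<close> \<open>degree c > 0\<close> by (simp add: degree_mult_eq)
    finally show False by (simp add: degree_cyclotomic_3pow)
  qed
qed

lemma prime_cyclotomic_3pow: "prime (cyclotomic_3pow b)"
proof (rule normalization_semidom_class.primeI)
  show "prime_elem (cyclotomic_3pow b)"
    by (rule irreducible_imp_prime_elem[OF irreducible_cyclotomic_3pow])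
  show "normalize (cyclotomic_3pow b) = cyclotomic_3pow b"
    by (simp add: normalize_monic lead_coeff_cyclotomic_3pow)
qed

lemma cyclotomic_3pow_power_two_pow:
  "cyclotomic_3pow b ^ (2 ^ a) = 1 + monom 1 (2 ^ a * 3 ^ b) + monom 1 (2 * (2 ^ a * 3 ^ b))"
proof (induction a)
  case 0
  show ?case by (simp add: cyclotomic_3pow_def)
next
  case (Suc a)
  have "cyclotomic_3pow b ^ (2 ^ Suc a) = (cyclotomic_3pow b ^ (2 ^ a)) ^ 2"
    by (simp add: power_mult[symmetric] mult.commute)
  also have "\<dots> = 1 + monom 1 (2 ^ a * 3 ^ b) ^ 2 + monom 1 (2 * (2 ^ a * 3 ^ b)) ^ 2"
    by (simp add: Suc.IH square_add_char_two[OF gf2_poly_two_eq_zero])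
  also have "\<dots> = 1 + monom 1 (2 ^ Suc a * 3 ^ b) + monom 1 (2 * (2 ^ Suc a * 3 ^ b))"
    by (simp add: monom_power algebra_simps)
  finally show ?case .
qed

definition supported_on_multiples :: "nat \<Rightarrow> 'a::zero poly \<Rightarrow> bool" where
  "supported_on_multiples m p \<longleftrightarrow> (\<forall>j. coeff p j \<noteq> 0 \<longrightarrow> m dvd j)"

lemma supported_on_multiples_add:
  "supported_on_multiples m p \<Longrightarrow> supported_on_multiples m q
    \<Longrightarrow> supported_on_multiples m (p + q)"
  by (simp add: supported_on_multiples_def) (metis add.left_neutral add.right_neutral)

lemma supported_on_multiples_one: "supported_on_multiples m (1 :: 'a::comm_semiring_1 poly)"
  by (simp add: supported_on_multiples_def coeff_1)

lemma supported_on_multiples_const: "supported_on_multiples m [:c:]"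
  by (auto simp: supported_on_multiples_def coeff_pCons split: nat.splits)

lemma supported_on_multiples_monom: "m dvd n \<Longrightarrow> supported_on_multiples m (monom c n)"
  by (auto simp: supported_on_multiples_def coeff_monom split: if_splits)

lemma supported_on_multiples_mult:
  fixes p q :: "'a::comm_semiring_0 poly"
  assumes p: "supported_on_multiples m p" and q: "supported_on_multiples m q"
  shows "supported_on_multiples m (p * q)"
  unfolding supported_on_multiples_def
proof (intro allI impI)
  fix j assume "coeff (p * q) j \<noteq> 0"
  hence "(\<Sum>i\<le>j. coeff p i * coeff q (j - i)) \<noteq> 0" by (simp add: coeff_mult)
  then obtain i where "i \<le> j" "coeff p i * coeff q (j - i) \<noteq> 0"
    by (metis (no_types, lifting) atMost_iff sum.neutral)
  hence "coeff p i \<noteq> 0" "coeff q (j - i) \<noteq> 0" by (metis mult_zero_left, metis mult_zero_right)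
  with p q have "m dvd i" "m dvd j - i" by (simp_all add: supported_on_multiples_def)
  with \<open>i \<le> j\<close> show "m dvd j" by (metis dvd_add le_add_diff_inverse)
qed

lemma supported_on_multiples_power:
  fixes p :: "'a::comm_semiring_1 poly"
  shows "supported_on_multiples m p \<Longrightarrow> supported_on_multiples m (p ^ n)"
  by (induction n)
     (simp_all add: supported_on_multiples_mult supported_on_multiples_one)

lemma supported_on_multiples_dvd_cyclotomic_3pow_power:
  assumes "G dvd cyclotomic_3pow b ^ n"
  shows "supported_on_multiples (3 ^ b) G"
proof -
  obtain k where k: "normalize G = cyclotomic_3pow b ^ k"
    using divides_primepow[OF prime_cyclotomic_3pow assms] by blast
  have "supported_on_multiples (3 ^ b) (cyclotomic_3pow b)"
    unfolding cyclotomic_3pow_def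
    by (intro supported_on_multiples_add supported_on_multiples_monom
        supported_on_multiples_one) simp_all
  hence "supported_on_multiples (3 ^ b) (unit_factor G * normalize G)"
    unfolding k unit_factor_poly_def
    by (intro supported_on_multiples_mult supported_on_multiples_const supported_on_multiples_power)
  thus ?thesis by simp
qed

section \<open>Rescaling exponents into \<open>F\<^sub>2[X]\<close>\<close>

definition grid :: "nat \<Rightarrow> rat set" where
  "grid N = range (\<lambda>n. of_nat n / of_nat N)"

lemma grid_add: "s \<in> grid N \<Longrightarrow> t \<in> grid N \<Longrightarrow> s + t \<in> grid N"
  unfolding grid_def by (auto simp: add_divide_distrib[symmetric] simp flip: of_nat_add)

lemma grid_subset_grid: assumes "N dvd N'" "N' > 0" shows "grid N \<subseteq> grid N'"
proof
  fix s assume "s \<in> grid N"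
  then obtain n where s: "s = of_nat n / of_nat N" by (auto simp: grid_def)
  obtain k where k: "N' = N * k" using assms(1) ..
  with assms(2) have "s = (\<lambda>n. of_nat n / of_nat N') (n * k)" by (simp add: s)
  thus "s \<in> grid N'" unfolding grid_def by (rule range_eqI)
qed

lemma of_nat_in_grid: "N > 0 \<Longrightarrow> of_nat k \<in> grid N"
  unfolding grid_def by (rule range_eqI[of _ _ "k * N"]) simp

definition six_adic :: "rat set" where
  "six_adic = (\<Union>c. grid (6 ^ c))"

lemma grid_six_pow_mono: "c \<le> c' \<Longrightarrow> grid (6 ^ c) \<subseteq> grid (6 ^ c')"
  by (intro grid_subset_grid le_imp_power_dvd) simp_all

lemma finite_subset_six_adic_grid:
  assumes "finite S" "S \<subseteq> six_adic"
  shows "\<exists>c. S \<subseteq> grid (6 ^ c)"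
  using assms
proof (induction S rule: finite_induct)
  case (insert s S)
  then obtain c c' where "S \<subseteq> grid (6 ^ c)" "s \<in> grid (6 ^ c')" by (auto simp: six_adic_def)
  hence "insert s S \<subseteq> grid (6 ^ max c c')"
    using grid_six_pow_mono[of c "max c c'"] grid_six_pow_mono[of c' "max c c'"] by auto
  thus ?case ..
qed simp

lemma zero_six_adic: "0 \<in> six_adic"
  unfolding six_adic_def grid_def by (rule UN_I[of 0]) (auto simp: image_iff)

lemma six_adic_add: "s \<in> six_adic \<Longrightarrow> t \<in> six_adic \<Longrightarrow> s + t \<in> six_adic"
  using finite_subset_six_adic_grid[of "{s, t}"] grid_add by (auto simp: six_adic_def)

lemma of_bit_add_gf2: "(of_bit (a + b) :: gf2) = of_bit a + of_bit b"
  by (cases "a = 0"; cases "b = 0") (simp_all add: gf2_two_eq_zero)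

lemma of_bit_mult_gf2: "(of_bit (a * b) :: gf2) = of_bit a * of_bit b"
  by (cases "a = 0"; cases "b = 0") simp_all

lemma poly_mapping_sum_single:
  "(\<Sum>s\<in>Poly_Mapping.keys f. Poly_Mapping.single s (Poly_Mapping.lookup f s)) = f"
  by (rule poly_mapping_eqI) (simp add: lookup_sum lookup_single when_def in_keys_iff sum.If_cases)

definition grid_index :: "nat \<Rightarrow> rat \<Rightarrow> nat" where
  "grid_index N s = nat \<lfloor>s * of_nat N\<rfloor>"

lemma grid_index_of_nat_div: "N > 0 \<Longrightarrow> grid_index N (of_nat n / of_nat N) = n"
  by (simp add: grid_index_def)

lemma grid_index_of_nat: "grid_index N (of_nat k) = k * N"
  unfolding grid_index_def by (metis floor_of_nat nat_int of_nat_mult)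

lemma grid_index_add:
  assumes N: "N > 0" and "s \<in> grid N" "t \<in> grid N"
  shows "grid_index N (s + t) = grid_index N s + grid_index N t"
proof -
  obtain m n where st: "s = of_nat m / of_nat N" "t = of_nat n / of_nat N"
    using assms(2,3) by (auto simp: grid_def)
  have "grid_index N (s + t) = grid_index N (of_nat (m + n) / of_nat N)"
    by (simp add: st add_divide_distrib)
  also have "\<dots> = grid_index N s + grid_index N t"
    by (simp only: st grid_index_of_nat_div[OF N])
  finally show ?thesis .
qed

lemma grid_index_eq_iff:
  assumes "N > 0" "s \<in> grid N"
  shows "grid_index N s = n \<longleftrightarrow> s = of_nat n / of_nat N"
proof -
  obtain m where "s = of_nat m / of_nat N" using assms(2) by (auto simp: grid_def)
  with assms(1) show ?thesis by (auto simp: grid_index_of_nat_div)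
qed

text \<open>On elements supported in \<open>grid N\<close> this is the ring homomorphism
  \<open>x\<^sup>s \<mapsto> X\<^bsup>s N\<^esup>\<close> into \<open>F\<^sub>2[X]\<close>.\<close>

definition grid_poly :: "nat \<Rightarrow> (rat \<Rightarrow>\<^sub>0 bit) \<Rightarrow> gf2 poly" where
  "grid_poly N f = (\<Sum>s\<in>Poly_Mapping.keys f. monom (of_bit (Poly_Mapping.lookup f s)) (grid_index N s))"

lemma grid_poly_eq_sum_superset:
  assumes "finite S" "Poly_Mapping.keys f \<subseteq> S"
  shows "grid_poly N f = (\<Sum>s\<in>S. monom (of_bit (Poly_Mapping.lookup f s)) (grid_index N s))"
  unfolding grid_poly_def
  by (rule sum.mono_neutral_left[OF assms]) (auto simp: in_keys_iff)

lemma grid_poly_zero [simp]: "grid_poly N 0 = 0"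
  by (simp add: grid_poly_def)

lemma grid_poly_add: "grid_poly N (f + g) = grid_poly N f + grid_poly N g"
proof -
  let ?S = "Poly_Mapping.keys f \<union> Poly_Mapping.keys g"
  let ?m = "\<lambda>h s. monom (of_bit (Poly_Mapping.lookup h s)) (grid_index N s) :: gf2 poly"
  have "grid_poly N (f + g) = (\<Sum>s\<in>?S. ?m (f + g) s)"
    by (rule grid_poly_eq_sum_superset) (simp_all add: keys_add)
  also have "\<dots> = (\<Sum>s\<in>?S. ?m f s + ?m g s)"
    by (intro sum.cong refl) (simp only: lookup_add of_bit_add_gf2 add_monom)
  also have "\<dots> = grid_poly N f + grid_poly N g"
    by (simp only: sum.distrib grid_poly_eq_sum_superset[of ?S, symmetric] finite_Un finite_keys
        Un_upper1 Un_upper2 conj_absorb)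
  finally show ?thesis .
qed

lemma grid_poly_sum: "grid_poly N (\<Sum>i\<in>A. F i) = (\<Sum>i\<in>A. grid_poly N (F i))"
  by (induction A rule: infinite_finite_induct) (simp_all add: grid_poly_add)

lemma grid_poly_single:
  "grid_poly N (Poly_Mapping.single s c) = monom (of_bit c) (grid_index N s)"
  by (cases "c = 0") (simp_all add: grid_poly_def)

lemma grid_poly_mult:
  assumes N: "N > 0" and f: "Poly_Mapping.keys f \<subseteq> grid N" and g: "Poly_Mapping.keys g \<subseteq> grid N"
  shows "grid_poly N (f * g) = grid_poly N f * grid_poly N g"
proof -
  let ?m = "\<lambda>h s. monom (of_bit (Poly_Mapping.lookup h s)) (grid_index N s) :: gf2 poly"
  have "f * g = (\<Sum>s\<in>Poly_Mapping.keys f. Poly_Mapping.single s (Poly_Mapping.lookup f s))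
      * (\<Sum>t\<in>Poly_Mapping.keys g. Poly_Mapping.single t (Poly_Mapping.lookup g t))"
    by (simp only: poly_mapping_sum_single)
  also have "\<dots> = (\<Sum>s\<in>Poly_Mapping.keys f. \<Sum>t\<in>Poly_Mapping.keys g.
      Poly_Mapping.single (s + t) (Poly_Mapping.lookup f s * Poly_Mapping.lookup g t))"
    by (simp only: sum_product mult_single)
  finally have "grid_poly N (f * g) = (\<Sum>s\<in>Poly_Mapping.keys f. \<Sum>t\<in>Poly_Mapping.keys g.
      monom (of_bit (Poly_Mapping.lookup f s * Poly_Mapping.lookup g t)) (grid_index N (s + t)))"
    by (simp only: grid_poly_sum grid_poly_single)
  also have "\<dots> = (\<Sum>s\<in>Poly_Mapping.keys f. \<Sum>t\<in>Poly_Mapping.keys g. ?m f s * ?m g t)"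
  proof (intro sum.cong refl)
    fix s t assume "s \<in> Poly_Mapping.keys f" "t \<in> Poly_Mapping.keys g"
    with f g have "grid_index N (s + t) = grid_index N s + grid_index N t"
      by (intro grid_index_add[OF N]) auto
    thus "monom (of_bit (Poly_Mapping.lookup f s * Poly_Mapping.lookup g t)) (grid_index N (s + t))
        = ?m f s * ?m g t"
      by (simp only: of_bit_mult_gf2 mult_monom)
  qed
  also have "\<dots> = grid_poly N f * grid_poly N g"
    by (simp only: grid_poly_def sum_product)
  finally show ?thesis .
qed

lemma coeff_grid_poly:
  assumes N: "N > 0" and f: "Poly_Mapping.keys f \<subseteq> grid N"
  shows "coeff (grid_poly N f) n = of_bit (Poly_Mapping.lookup f (of_nat n / of_nat N))"
proof -
  have "coeff (grid_poly N f) n = (\<Sum>s\<in>Poly_Mapping.keys f.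
      if grid_index N s = n then of_bit (Poly_Mapping.lookup f s) else 0)"
    by (simp only: grid_poly_def coeff_sum coeff_monom)
  also have "\<dots> = (\<Sum>s\<in>Poly_Mapping.keys f.
      if s = of_nat n / of_nat N then of_bit (Poly_Mapping.lookup f s) else 0)"
  proof (intro sum.cong refl)
    fix s assume "s \<in> Poly_Mapping.keys f"
    with f have "grid_index N s = n \<longleftrightarrow> s = of_nat n / of_nat N"
      by (intro grid_index_eq_iff[OF N]) auto
    thus "(if grid_index N s = n then of_bit (Poly_Mapping.lookup f s) else 0)
        = (if s = of_nat n / of_nat N then of_bit (Poly_Mapping.lookup f s) else (0::gf2))"
      by simp
  qed
  also have "\<dots> = of_bit (Poly_Mapping.lookup f (of_nat n / of_nat N))"
    by (simp add: in_keys_iff)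
  finally show ?thesis .
qed

lemma grid_poly_one: "grid_poly N 1 = 1"
  using grid_poly_single[of N 0 1] by (simp add: grid_index_def monom_0 pCons_one)

definition trinomial :: "rat \<Rightarrow>\<^sub>0 bit" where
  "trinomial = Poly_Mapping.single 0 1 + Poly_Mapping.single 1 1 + Poly_Mapping.single 2 1"

lemma keys_trinomial: "Poly_Mapping.keys trinomial \<subseteq> {0, 1, 2}"
  unfolding trinomial_def by (auto dest!: subsetD[OF keys_add])

lemma grid_poly_trinomial: "grid_poly (6 ^ c) trinomial = cyclotomic_3pow c ^ (2 ^ c)"
proof -
  have "grid_poly (6 ^ c) trinomial = 1 + monom 1 (2 ^ c * 3 ^ c) + monom 1 (2 * (2 ^ c * 3 ^ c))"
    using grid_index_of_nat[of "6 ^ c" 1] grid_index_of_nat[of "6 ^ c" 2] grid_poly_one[of "6 ^ c"]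
    by (simp add: trinomial_def grid_poly_add grid_poly_single power_mult_distrib[symmetric])
  thus ?thesis by (simp add: cyclotomic_3pow_power_two_pow)
qed

section \<open>Dyadic rationals and the generators\<close>

definition dyadic :: "rat \<Rightarrow> bool" where
  "dyadic q \<longleftrightarrow> (\<exists>(z::int) (j::nat). q = of_int z / 2 ^ j)"

lemma dyadic_of_int: "dyadic (of_int z)"
  unfolding dyadic_def by (rule exI[of _ z], rule exI[of _ 0]) simp

lemma dyadic_add: assumes "dyadic a" "dyadic b" shows "dyadic (a + b)"
proof -
  obtain z j z' j' where "a = of_int z / 2 ^ j" "b = of_int z' / 2 ^ j'"
    using assms by (auto simp: dyadic_def)
  hence "a + b = (of_int z * 2 ^ j' + of_int z' * 2 ^ j) / (2 ^ j * 2 ^ j')"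
    by (simp add: add_frac_eq)
  also have "\<dots> = of_int (z * 2 ^ j' + z' * 2 ^ j) / 2 ^ (j + j')"
    by (simp add: power_add)
  finally have "a + b = of_int (z * 2 ^ j' + z' * 2 ^ j) / 2 ^ (j + j')" .
  thus ?thesis unfolding dyadic_def by blast
qed

lemma dyadic_uminus: "dyadic a \<Longrightarrow> dyadic (- a)"
  unfolding dyadic_def by (metis minus_divide_left of_int_minus)

lemma dyadic_diff: "dyadic a \<Longrightarrow> dyadic b \<Longrightarrow> dyadic (a - b)"
  using dyadic_add[of a "- b"] dyadic_uminus[of b] by simp

lemma dyadic_of_int_mult: "dyadic a \<Longrightarrow> dyadic (of_int z * a)"
  unfolding dyadic_def by (metis of_int_mult times_divide_eq_right)

lemma dyadic_half: assumes "dyadic (2 * a)" shows "dyadic a"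
proof -
  obtain z j where "2 * a = of_int z / 2 ^ j" using assms by (auto simp: dyadic_def)
  hence "a = of_int z / 2 ^ Suc j" by (simp add: field_simps)
  thus ?thesis unfolding dyadic_def by blast
qed

lemma three_pow_dvd_if_dyadic:
  assumes "dyadic (of_int I / 3 ^ K)"
  shows "(3::int) ^ K dvd I"
proof -
  obtain z j where "of_int I / 3 ^ K = (of_int z / 2 ^ j :: rat)" using assms by (auto simp: dyadic_def)
  hence "of_int (I * 2 ^ j) = (of_int (z * 3 ^ K) :: rat)" by (simp add: field_simps)
  hence "I * 2 ^ j = z * 3 ^ K" by (simp only: of_int_eq_iff)
  hence "(3::int) ^ K dvd I * 2 ^ j" by simp
  moreover have "coprime ((3::int) ^ K) (2 ^ j)" by simp
  ultimately show ?thesis by (simp add: coprime_dvd_mult_left_iff)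
qed

definition sign_of :: "bool \<Rightarrow> int" where
  "sign_of b = (if b then 1 else -1)"

text \<open>\<open>offset k\<close> is the rational in \<open>[0, 2\<^bsup>-(k+4)\<^esup>)\<close> that is congruent to \<open>3\<^bsup>-k\<^esup>\<close>
  modulo the dyadic rationals.\<close>

definition offset :: "nat \<Rightarrow> rat" where
  "offset k = of_nat (2 ^ (k + 4) mod 3 ^ k) / (3 ^ k * 2 ^ (k + 4))"

definition generator :: "nat \<times> bool \<Rightarrow> rat" where
  "generator z = 1 / 2 ^ (fst z + 1) + of_int (sign_of (snd z)) * offset (fst z)"

lemma offset_nonneg: "0 \<le> offset k"
  by (simp add: offset_def)

lemma offset_less: "offset k < 1 / 2 ^ (k + 4)"
proof -
  have "(of_nat (2 ^ (k + 4) mod 3 ^ k) :: rat) < 3 ^ k"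
    by (metis mod_less_divisor of_nat_less_iff of_nat_numeral of_nat_power zero_less_numeral zero_less_power)
  thus ?thesis by (simp add: offset_def field_simps)
qed

lemma dyadic_offset_diff: "dyadic (offset k - 1 / 3 ^ k)"
proof -
  define q r where "q = (2::nat) ^ (k + 4) div 3 ^ k" and "r = (2::nat) ^ (k + 4) mod 3 ^ k"
  have rel: "(2::rat) ^ (k + 4) = of_nat q * 3 ^ k + of_nat r"
    by (metis (mono_tags) q_def r_def div_mult_mod_eq of_nat_add of_nat_mult of_nat_numeral of_nat_power)
  have "offset k - 1 / 3 ^ k = (of_nat r - 2 ^ (k + 4)) / (3 ^ k * 2 ^ (k + 4))"
    by (simp add: offset_def r_def[symmetric] field_simps)
  also have "of_nat r - 2 ^ (k + 4) = - (of_nat q * 3 ^ k :: rat)" using rel by simp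
  also have "- (of_nat q * 3 ^ k) / (3 ^ k * 2 ^ (k + 4)) = (of_int (- int q) / 2 ^ (k + 4) :: rat)"
    by simp
  finally have "offset k - 1 / 3 ^ k = of_int (- int q) / 2 ^ (k + 4)" .
  thus ?thesis unfolding dyadic_def by blast
qed

lemma generator_ge: "7 / 2 ^ (k + 4) \<le> generator (k, b)"
  and generator_le: "generator (k, b) \<le> 9 / 2 ^ (k + 4)"
proof -
  have "(1::rat) / 2 ^ (k + 1) = 8 / 2 ^ (k + 4)" by (simp add: power_add)
  moreover have "\<bar>of_int (sign_of b) * offset k\<bar> < 1 / 2 ^ (k + 4)"
    using offset_nonneg[of k] offset_less[of k] by (simp add: sign_of_def)
  ultimately show "7 / 2 ^ (k + 4) \<le> generator (k, b)" "generator (k, b) \<le> 9 / 2 ^ (k + 4)"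
    by (simp_all add: generator_def abs_less_iff add_divide_distrib[symmetric])
qed

lemma generator_pos: "0 < generator z"
  using order_less_le_trans[OF _ generator_ge[of "fst z" "snd z"]] by simp

lemma generator_less_if_level_less:
  assumes "k < n" shows "generator (n, b) < generator (k, b')"
proof -
  have "(2::rat) ^ (k + 5) \<le> 2 ^ (n + 4)" using assms by (intro power_increasing) simp_all
  hence "(9::rat) / 2 ^ (n + 4) \<le> 9 / 2 ^ (k + 5)" by (intro frac_le) simp_all
  also have "\<dots> < 7 / 2 ^ (k + 4)" by (simp add: power_add field_simps)
  finally have "(9::rat) / 2 ^ (n + 4) < 7 / 2 ^ (k + 4)" .
  thus ?thesis using generator_le[of n b] generator_ge[of k b'] by linarith
qed

lemma generator_True_plus_False: "generator (k, True) + generator (k, False) = 1 / 2 ^ k"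
  by (simp add: generator_def sign_of_def power_add)

lemma dyadic_generator_diff: "dyadic (generator z - of_int (sign_of (snd z)) / 3 ^ fst z)"
proof -
  have "generator z - of_int (sign_of (snd z)) / 3 ^ fst z
      = of_int 1 / 2 ^ (fst z + 1) + of_int (sign_of (snd z)) * (offset (fst z) - 1 / 3 ^ fst z)"
    by (simp add: generator_def algebra_simps)
  moreover have "dyadic (of_int 1 / 2 ^ (fst z + 1))" unfolding dyadic_def by blast
  ultimately show ?thesis using dyadic_add dyadic_of_int_mult dyadic_offset_diff by metis
qed

definition three_adic_value :: "(nat \<times> bool) list \<Rightarrow> rat" where
  "three_adic_value zs = (\<Sum>z\<leftarrow>zs. of_int (sign_of (snd z)) / 3 ^ fst z)"

lemma dyadic_sum_generators_diff: "dyadic (sum_list (map generator zs) - three_adic_value zs)"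
proof (induction zs)
  case Nil
  show ?case using dyadic_of_int[of 0] by (simp add: three_adic_value_def)
next
  case (Cons z zs)
  thus ?case using dyadic_add[OF dyadic_generator_diff[of z] Cons.IH]
    by (simp add: three_adic_value_def algebra_simps)
qed

lemma three_adic_value_eq_div:
  assumes "\<forall>z\<in>set zs. fst z \<le> K"
  shows "\<exists>I. three_adic_value zs = of_int I / 3 ^ K"
  using assms
proof (induction zs)
  case Nil
  show ?case by (simp add: three_adic_value_def)
next
  case (Cons z zs)
  then obtain I where I: "three_adic_value zs = of_int I / 3 ^ K" by auto
  have "(3::rat) ^ K = 3 ^ fst z * 3 ^ (K - fst z)"
    using Cons.prems by (simp flip: power_add)
  hence "of_int (sign_of (snd z)) / 3 ^ fst z = of_int (sign_of (snd z) * 3 ^ (K - fst z)) / (3::rat) ^ K"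
    by simp
  hence "three_adic_value (z # zs) = of_int (sign_of (snd z) * 3 ^ (K - fst z) + I) / 3 ^ K"
    using I by (simp add: three_adic_value_def add_divide_distrib)
  thus ?case ..
qed

lemma abs_three_adic_value_le: "\<bar>three_adic_value zs\<bar> \<le> (\<Sum>z\<leftarrow>zs. 1 / 3 ^ fst z)"
proof -
  have "\<bar>three_adic_value zs\<bar>
      \<le> sum_list (map abs (map (\<lambda>z. of_int (sign_of (snd z)) / 3 ^ fst z) zs))"
    unfolding three_adic_value_def by (rule sum_list_abs)
  also have "map abs (map (\<lambda>z. of_int (sign_of (snd z)) / 3 ^ fst z) zs)
      = map (\<lambda>z. 1 / (3::rat) ^ fst z) zs"
    by (auto simp: sign_of_def)
  finally show ?thesis .
qed

lemma three_pow_ratio_le: "n < k \<Longrightarrow> (3::rat) ^ n / 3 ^ k \<le> 2 / 3 * (2 ^ n / 2 ^ k)"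
proof -
  assume "n < k"
  then obtain i where k: "k = Suc (n + i)" using less_imp_Suc_add by blast
  have "(2::rat) ^ i \<le> 3 ^ i" by (rule power_mono) simp_all
  thus ?thesis by (simp add: k power_add field_simps)
qed

lemma one_le_abs_three_pow_three_adic_value:
  assumes n: "1 \<le> n" and cong: "dyadic (three_adic_value zs - of_int t / 3 ^ n)"
    and t: "\<not> 3 dvd t"
  shows "1 \<le> \<bar>3 ^ n * three_adic_value zs\<bar>"
proof -
  define K where "K = Max (insert n (fst ` set zs))"
  have "n \<le> K" "\<forall>z\<in>set zs. fst z \<le> K" by (auto simp: K_def)
  then obtain I where I: "three_adic_value zs = of_int I / 3 ^ K"
    using three_adic_value_eq_div by blast
  have K: "(3::rat) ^ K = 3 ^ n * 3 ^ (K - n)" using \<open>n \<le> K\<close> by (simp flip: power_add)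
  have "of_int t / 3 ^ n = of_int (t * 3 ^ (K - n)) / (3::rat) ^ K" by (simp add: K)
  hence "three_adic_value zs - of_int t / 3 ^ n = of_int (I - t * 3 ^ (K - n)) / 3 ^ K"
    by (simp add: I diff_divide_distrib)
  with cong have "3 ^ K dvd I - t * 3 ^ (K - n)" by (simp add: three_pow_dvd_if_dyadic)
  then obtain m where m: "I = t * 3 ^ (K - n) + 3 ^ K * m" by (auto simp: dvd_def algebra_simps)
  have "3 ^ n * three_adic_value zs = of_int I / 3 ^ (K - n)" by (simp add: I K)
  also have "\<dots> = of_int (t + 3 ^ n * m)" by (simp add: m K add_divide_distrib)
  finally have x: "3 ^ n * three_adic_value zs = of_int (t + 3 ^ n * m)" .
  have "(3::int) dvd 3 ^ n * m" using n by (simp add: dvd_power)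
  with t have "t + 3 ^ n * m \<noteq> 0" by (metis add_diff_cancel_left' diff_0 dvd_minus_iff)
  thus ?thesis unfolding x by linarith
qed

text \<open>A level-\<open>k\<close> generator contributes \<open>\<plusminus>3\<^bsup>-k\<^esup>\<close> to the 3-adic value at the price
  \<open>2\<^bsup>-k\<^esup>\<close>, and the ratio \<open>(3/2)\<^sup>k\<close> of price to contribution is at least \<open>3/2\<close>.\<close>

lemma weight_ge_if_three_adic_value:
  assumes "1 \<le> n" and above: "\<forall>z\<in>set zs. n < fst z"
    and "dyadic (three_adic_value zs - of_int t / 3 ^ n)" and "\<not> 3 dvd t"
  shows "(3::rat) / 2 \<le> 2 ^ n * (\<Sum>z\<leftarrow>zs. 1 / 2 ^ fst z)"
proof -
  have "1 \<le> \<bar>3 ^ n * three_adic_value zs\<bar>"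
    using assms by (intro one_le_abs_three_pow_three_adic_value)
  also have "\<dots> \<le> 3 ^ n * (\<Sum>z\<leftarrow>zs. 1 / 3 ^ fst z)"
    using abs_three_adic_value_le[of zs] by (simp add: abs_mult)
  also have "\<dots> = (\<Sum>z\<leftarrow>zs. 3 ^ n / 3 ^ fst z)" by (simp add: sum_list_const_mult[symmetric])
  also have "\<dots> \<le> (\<Sum>z\<leftarrow>zs. 2 / 3 * (2 ^ n / 2 ^ fst z))"
    using above by (intro sum_list_mono three_pow_ratio_le) simp
  also have "\<dots> = 2 / 3 * (2 ^ n * (\<Sum>z\<leftarrow>zs. 1 / 2 ^ fst z))"
    by (simp add: sum_list_const_mult[symmetric])
  finally show ?thesis by simp
qed

lemma sum_generators_ge: "7 / 16 * (\<Sum>z\<leftarrow>zs. 1 / 2 ^ fst z) \<le> sum_list (map generator zs)"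
proof -
  have "(7::rat) / 16 * (\<Sum>z\<leftarrow>zs. 1 / 2 ^ fst z) = (\<Sum>z\<leftarrow>zs. 7 / 2 ^ (fst z + 4))"
    by (simp add: sum_list_const_mult[symmetric] power_add mult.commute)
  also have "\<dots> \<le> sum_list (map generator zs)"
    using generator_ge by (intro sum_list_mono) (metis prod.collapse)
  finally show ?thesis .
qed

lemma sum_generators_ge_if_three_adic:
  assumes "1 \<le> n" "\<forall>z\<in>set zs. n < fst z"
    and "dyadic (sum_list (map generator zs) - of_int t / 3 ^ n)" "\<not> 3 dvd t"
  shows "(21::rat) / 2 ^ (n + 5) \<le> sum_list (map generator zs)"
proof -
  have "dyadic (three_adic_value zs - of_int t / 3 ^ n)"
    using dyadic_diff[OF assms(3) dyadic_sum_generators_diff[of zs]] by simp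
  hence "(3::rat) / 2 \<le> 2 ^ n * (\<Sum>z\<leftarrow>zs. 1 / 2 ^ fst z)"
    using assms by (intro weight_ge_if_three_adic_value) simp_all
  hence "(21::rat) / 2 ^ (n + 5) \<le> 7 / 16 * (\<Sum>z\<leftarrow>zs. 1 / 2 ^ fst z)"
    by (simp add: field_simps power_add)
  with sum_generators_ge[of zs] show ?thesis by (rule order_trans[rotated])
qed

lemma sum_generators_nonneg: "0 \<le> sum_list (map generator zs)"
  by (induction zs) (auto intro: add_nonneg_nonneg less_imp_le[OF generator_pos])

lemma sum_generators_pos: "zs \<noteq> [] \<Longrightarrow> 0 < sum_list (map generator zs)"
  by (induction zs) (auto intro: add_pos_nonneg generator_pos sum_generators_nonneg)

lemma generator_le_sum_generators: "z \<in> set zs \<Longrightarrow> generator z \<le> sum_list (map generator zs)"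
  using sum_list_map_remove1[of z zs generator] sum_generators_nonneg[of "remove1 z zs"] by simp

lemma sum_list_map_filter_split:
  "sum_list (map f xs) = sum_list (map f (filter P xs)) + sum_list (map f (filter (\<lambda>x. \<not> P x) xs))"
  for f :: "'a \<Rightarrow> 'b::comm_monoid_add"
  by (induction xs) (simp_all add: algebra_simps)

lemma generator_in_grid: "generator (k, b) \<in> grid (2 ^ (k + 4) * 3 ^ k)"
proof -
  define r where "r = (2::nat) ^ (k + 4) mod 3 ^ k"
  have "r < 3 ^ k" by (simp add: r_def)
  hence "r \<le> 8 * 3 ^ k" by linarith
  have "generator (k, b) = of_nat (if b then 8 * 3 ^ k + r else 8 * 3 ^ k - r) / of_nat (2 ^ (k + 4) * 3 ^ k)"
    using \<open>r \<le> 8 * 3 ^ k\<close>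
    by (simp add: generator_def offset_def sign_of_def r_def of_nat_diff field_simps power_add)
  thus ?thesis unfolding grid_def by (rule range_eqI)
qed

lemma generator_six_adic: "generator z \<in> six_adic"
proof -
  obtain k b where z: "z = (k, b)" by fastforce
  have "(6::nat) ^ (k + 4) = 2 ^ (k + 4) * 3 ^ (k + 4)" by (simp flip: power_mult_distrib)
  hence "2 ^ (k + 4) * 3 ^ k dvd (6::nat) ^ (k + 4)" by (simp add: mult_dvd_mono le_imp_power_dvd)
  hence "grid (2 ^ (k + 4) * 3 ^ k) \<subseteq> grid (6 ^ (k + 4))" by (rule grid_subset_grid) simp
  thus ?thesis using generator_in_grid[of k b] by (auto simp: z six_adic_def)
qed

section \<open>The monoid and its atoms\<close>

definition gen_monoid :: "rat set" where
  "gen_monoid = {sum_list (map generator zs) | zs. \<forall>z\<in>set zs. 1 \<le> fst z}"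

lemma gen_monoid_zero: "0 \<in> gen_monoid"
  unfolding gen_monoid_def by (rule CollectI, rule exI[of _ "[]"]) simp

lemma gen_monoid_add:
  assumes "x \<in> gen_monoid" "y \<in> gen_monoid"
  shows "x + y \<in> gen_monoid"
proof -
  obtain xs ys where "x = sum_list (map generator xs)" "\<forall>z\<in>set xs. 1 \<le> fst z"
    and "y = sum_list (map generator ys)" "\<forall>z\<in>set ys. 1 \<le> fst z"
    using assms by (auto simp: gen_monoid_def)
  hence "x + y = sum_list (map generator (xs @ ys)) \<and> (\<forall>z\<in>set (xs @ ys). 1 \<le> fst z)" by auto
  thus ?thesis unfolding gen_monoid_def by blast
qed

lemma generator_mem_gen_monoid: "1 \<le> k \<Longrightarrow> generator (k, b) \<in> gen_monoid"
  unfolding gen_monoid_def by (intro CollectI exI[of _ "[(k, b)]"]) simp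

lemma gen_monoid_of_nat_mult: "x \<in> gen_monoid \<Longrightarrow> of_nat n * x \<in> gen_monoid"
  by (induction n) (simp_all add: gen_monoid_zero gen_monoid_add distrib_right)

lemma puiseux_gen_monoid: "puiseux_monoid gen_monoid"
  unfolding puiseux_monoid_def
  using gen_monoid_zero gen_monoid_add sum_generators_nonneg by (auto simp: gen_monoid_def)

lemma gen_monoid_subset_six_adic: "gen_monoid \<subseteq> six_adic"
proof
  fix x assume "x \<in> gen_monoid"
  then obtain zs where x: "x = sum_list (map generator zs)" by (auto simp: gen_monoid_def)
  have "sum_list (map generator zs) \<in> six_adic"
  proof (induction zs)
    case Nil
    show ?case by (simp add: zero_six_adic)
  next
    case (Cons z zs)
    thus ?case using six_adic_add[OF generator_six_adic] by simp
  qed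
  thus "x \<in> six_adic" by (simp add: x)
qed

lemma nonneg_dyadic_mem_gen_monoid:
  assumes "0 \<le> q" "dyadic q"
  shows "q \<in> gen_monoid"
proof -
  obtain z j where q: "q = of_int z / 2 ^ j" using assms(2) by (auto simp: dyadic_def)
  hence "of_int z = q * 2 ^ j" by simp
  with assms(1) have "z \<ge> 0" by (metis mult_nonneg_nonneg of_int_0_le_iff zero_le_numeral zero_le_power)
  hence "q = of_nat (2 * nat z) * (generator (j + 1, True) + generator (j + 1, False))"
    by (simp add: q generator_True_plus_False)
  thus ?thesis
    by (simp only: gen_monoid_of_nat_mult gen_monoid_add generator_mem_gen_monoid le_add2)
qed

lemma levels_ge_if_sum_generators_eq:
  assumes "sum_list (map generator zs) = generator (n, b)"
  shows "\<forall>z\<in>set zs. n \<le> fst z"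
proof
  fix z assume "z \<in> set zs"
  hence "generator z \<le> generator (n, b)" using generator_le_sum_generators assms by metis
  thus "n \<le> fst z"
    using generator_less_if_level_less[of "fst z" n b "snd z"] by (cases "fst z < n") auto
qed

lemma sum_generators_filter_le:
  "sum_list (map generator (filter P zs)) \<le> sum_list (map generator zs)"
  using sum_list_map_filter_split[of generator zs P]
    sum_generators_nonneg[of "filter (\<lambda>z. \<not> P z) zs"] by simp

lemma length_filter_level_le_one:
  assumes "sum_list (map generator zs) = generator (n, b)"
  shows "length (filter (\<lambda>z. fst z = n) zs) \<le> 1"
proof -
  define L where "L = filter (\<lambda>z. fst z = n) zs"
  have "(\<Sum>z\<leftarrow>L. 1 / 2 ^ fst z) = of_nat (length L) / (2::rat) ^ n"
    unfolding L_def by (induction zs) (simp_all add: add_divide_distrib)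
  hence "7 / 16 * (of_nat (length L) / 2 ^ n) \<le> sum_list (map generator L)"
    using sum_generators_ge[of L] by simp
  also have "\<dots> \<le> generator (n, b)"
    using sum_generators_filter_le assms unfolding L_def by metis
  also have "\<dots> \<le> 9 / 2 ^ (n + 4)" by (rule generator_le)
  finally show ?thesis by (simp add: L_def field_simps power_add)
qed

text \<open>By size, a representation of \<open>generator (n, b)\<close> as a sum of generators has no term
  of level below \<open>n\<close> and at most one of level \<open>n\<close>; comparing 3-adic parts forces that term
  to be \<open>(n, b)\<close> itself.\<close>

lemma sum_generators_ne_generator:
  assumes n: "1 \<le> n" and len: "2 \<le> length zs"
  shows "sum_list (map generator zs) \<noteq> generator (n, b)"
proof
  assume sum: "sum_list (map generator zs) = generator (n, b)"
  define L where "L = filter (\<lambda>z. fst z = n) zs"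
  define R where "R = filter (\<lambda>z. \<not> fst z = n) zs"
  have split: "sum_list (map generator zs) = sum_list (map generator L) + sum_list (map generator R)"
    unfolding L_def R_def by (rule sum_list_map_filter_split)
  have L_levels: "\<forall>z\<in>set L. fst z = n" by (simp add: L_def)
  have R_levels: "\<forall>z\<in>set R. n < fst z"
    using levels_ge_if_sum_generators_eq[OF sum] by (auto simp: R_def)
  define t where "t = sign_of b - sum_list (map (sign_of \<circ> snd) L)"
  have "three_adic_value L = of_int (sum_list (map (sign_of \<circ> snd) L)) / 3 ^ n"
    using L_levels by (induction L) (auto simp: three_adic_value_def add_divide_distrib)
  hence "sum_list (map generator R) - of_int t / 3 ^ n
      = (generator (n, b) - of_int (sign_of b) / 3 ^ n)
        - (sum_list (map generator L) - three_adic_value L)"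
    using sum split by (simp add: t_def diff_divide_distrib)
  hence "dyadic (sum_list (map generator R) - of_int t / 3 ^ n)"
    using dyadic_generator_diff[of "(n, b)"] dyadic_sum_generators_diff[of L] by (simp add: dyadic_diff)
  moreover have "sum_list (map generator R) < 21 / 2 ^ (n + 5)"
  proof -
    have "sum_list (map generator R) \<le> generator (n, b)"
      using sum_generators_filter_le sum unfolding R_def by metis
    also have "\<dots> \<le> 9 / 2 ^ (n + 4)" by (rule generator_le)
    also have "\<dots> < 21 / 2 ^ (n + 5)" by (simp add: field_simps power_add)
    finally show ?thesis .
  qed
  ultimately have "3 dvd t" using sum_generators_ge_if_three_adic[OF n R_levels] by fastforce
  moreover have "length L \<le> 1" unfolding L_def by (rule length_filter_level_le_one[OF sum])
  ultimately have "L = [(n, b)]"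
    using L_levels by (cases L) (auto simp: t_def sign_of_def split: if_splits)
  hence "sum_list (map generator R) = 0" using sum split by simp
  moreover have "R \<noteq> []"
    using len \<open>L = [(n, b)]\<close> sum_length_filter_compl[of "\<lambda>z. fst z = n" zs]
    by (auto simp: L_def R_def)
  ultimately show False using sum_generators_pos by fastforce
qed

lemma monoid_atom_generator:
  assumes "1 \<le> n" shows "monoid_atom gen_monoid (generator (n, b))"
  unfolding monoid_atom_def
proof (intro conjI ballI impI)
  show "generator (n, b) \<in> gen_monoid" using assms by (rule generator_mem_gen_monoid)
  show "generator (n, b) \<noteq> 0" using generator_pos[of "(n, b)"] by simp
  fix x y assume "x \<in> gen_monoid" "y \<in> gen_monoid" and sum: "generator (n, b) = x + y"
  then obtain xs ys where xs: "x = sum_list (map generator xs)" and ys: "y = sum_list (map generator ys)"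
    by (auto simp: gen_monoid_def)
  show "x = 0 \<or> y = 0"
  proof (rule ccontr)
    assume "\<not> (x = 0 \<or> y = 0)"
    hence "2 \<le> length (xs @ ys)" using xs ys by (cases xs; cases ys) auto
    moreover have "sum_list (map generator (xs @ ys)) = generator (n, b)" using sum xs ys by simp
    ultimately show False using sum_generators_ne_generator[OF assms] by blast
  qed
qed

lemma atomic_gen_monoid: "atomic_monoid gen_monoid"
  unfolding atomic_monoid_def
proof (intro ballI impI)
  fix x assume "x \<in> gen_monoid" "x \<noteq> 0"
  then obtain zs where zs: "x = sum_list (map generator zs)" "\<forall>z\<in>set zs. 1 \<le> fst z"
    by (auto simp: gen_monoid_def)
  show "\<exists>as. as \<noteq> [] \<and> (\<forall>a\<in>set as. monoid_atom gen_monoid a) \<and> sum_list as = x"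
  proof (intro exI conjI)
    show "map generator zs \<noteq> []" using zs \<open>x \<noteq> 0\<close> by auto
    show "\<forall>a\<in>set (map generator zs). monoid_atom gen_monoid a"
      using zs(2) monoid_atom_generator by (metis imageE list.set_map prod.collapse)
  qed (simp add: zs)
qed

section \<open>The monoid algebra is not atomic\<close>

lemma monoid_algebra_mult:
  assumes "puiseux_monoid M" "f \<in> monoid_algebra M" "g \<in> monoid_algebra M"
  shows "f * g \<in> monoid_algebra M"
  using assms keys_mult[of f g] unfolding monoid_algebra_def puiseux_monoid_def by blast

lemma monoid_algebra_prod_list:
  assumes "puiseux_monoid M" "\<forall>f\<in>set fs. f \<in> monoid_algebra M"
  shows "prod_list fs \<in> monoid_algebra M"
  using assms(2)
proof (induction fs)
  case Nil
  show ?case using assms(1) by (simp add: monoid_algebra_def puiseux_monoid_def)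
qed (simp add: monoid_algebra_mult[OF assms(1)])

text \<open>In a factorisation into irreducibles the first factor would be the square of a non-unit.\<close>

lemma not_ma_atomic_if_divisors_squares:
  assumes M: "puiseux_monoid M"
    and T: "T \<in> monoid_algebra M" "T \<noteq> 0" "\<not> ma_unit M T"
    and squares: "\<And>g h. g \<in> monoid_algebra M \<Longrightarrow> h \<in> monoid_algebra M \<Longrightarrow> g * h = T
      \<Longrightarrow> \<exists>k\<in>monoid_algebra M. g = k * k"
  shows "\<not> ma_atomic M"
proof
  assume "ma_atomic M"
  then obtain g fs where irr: "ma_irreducible M g" "\<forall>f\<in>set fs. ma_irreducible M f"
    and prod: "g * prod_list fs = T"
    using T unfolding ma_atomic_def by (metis list.set_intros prod_list.Cons neq_Nil_conv)
  have "prod_list fs \<in> monoid_algebra M"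
    using irr(2) by (intro monoid_algebra_prod_list[OF M]) (simp add: ma_irreducible_def)
  then obtain k where k: "k \<in> monoid_algebra M" "g = k * k"
    using squares[OF _ _ prod] irr(1) by (auto simp: ma_irreducible_def)
  hence "ma_unit M k" using irr(1) by (auto simp: ma_irreducible_def)
  then obtain k' where "k' \<in> monoid_algebra M" "k * k' = 1" by (auto simp: ma_unit_def)
  moreover have "g * (k' * k') = (k * k') * (k * k')" using k(2) by (simp add: ac_simps)
  ultimately have "g * (k' * k') = 1" and "k' * k' \<in> monoid_algebra M"
    using monoid_algebra_mult[OF M] by simp_all
  hence "ma_unit M g" using irr(1) by (auto simp: ma_unit_def ma_irreducible_def)
  thus False using irr(1) by (simp add: ma_irreducible_def)
qed

definition halve_exponents :: "(rat \<Rightarrow>\<^sub>0 bit) \<Rightarrow> (rat \<Rightarrow>\<^sub>0 bit)" where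
  "halve_exponents f = Poly_Mapping.map_key (\<lambda>s. 2 * s) f"

lemma lookup_halve_exponents:
  "Poly_Mapping.lookup (halve_exponents f) s = Poly_Mapping.lookup f (2 * s)"
  unfolding halve_exponents_def by (simp add: map_key.rep_eq inj_on_def)

lemma keys_halve_exponents:
  "Poly_Mapping.keys (halve_exponents f) = (\<lambda>s. 2 * s) -` Poly_Mapping.keys f"
  by (auto simp: in_keys_iff lookup_halve_exponents)

lemma poly_mapping_bit_two_eq_zero: "(2::rat \<Rightarrow>\<^sub>0 bit) = 0"
  by (metis bit_numeral_even numeral_One single_numeral single_zero)

text \<open>The Frobenius map is the identity on \<open>F\<^sub>2\<close>, so squaring doubles exponents.\<close>

lemma halve_exponents_square: "halve_exponents f * halve_exponents f = f"
proof -
  let ?h = "halve_exponents f"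
  let ?K = "Poly_Mapping.keys ?h"
  have "?h * ?h = (\<Sum>s\<in>?K. Poly_Mapping.single s (Poly_Mapping.lookup ?h s)) ^ 2"
    by (simp only: poly_mapping_sum_single power2_eq_square)
  also have "\<dots> = (\<Sum>s\<in>?K. Poly_Mapping.single s (Poly_Mapping.lookup ?h s) ^ 2)"
    by (rule sum_square_char_two[OF poly_mapping_bit_two_eq_zero])
  also have "\<dots> = (\<Sum>s\<in>?K. Poly_Mapping.single (2 * s) (Poly_Mapping.lookup f (2 * s)))"
  proof (intro sum.cong refl)
    fix s
    have "Poly_Mapping.lookup ?h s * Poly_Mapping.lookup ?h s = Poly_Mapping.lookup f (2 * s)"
      by (cases "Poly_Mapping.lookup f (2 * s) = 0") (simp_all add: lookup_halve_exponents)
    moreover have "s + s = 2 * s" by simp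
    ultimately show "Poly_Mapping.single s (Poly_Mapping.lookup ?h s) ^ 2
        = Poly_Mapping.single (2 * s) (Poly_Mapping.lookup f (2 * s))"
      by (simp only: power2_eq_square mult_single)
  qed
  also have "\<dots> = (\<Sum>t\<in>(\<lambda>s. 2 * s) ` ?K. Poly_Mapping.single t (Poly_Mapping.lookup f t))"
    by (rule sum.reindex[symmetric, unfolded comp_def]) (simp add: inj_on_def)
  also have "(\<lambda>s. 2 * s) ` ?K = Poly_Mapping.keys f"
    unfolding keys_halve_exponents by (auto intro: image_eqI[of _ _ "_ / 2"])
  finally show ?thesis by (simp only: poly_mapping_sum_single)
qed

lemma halve_exponents_mem_gen_monoid:
  assumes "Poly_Mapping.keys f \<subseteq> {q. 0 \<le> q \<and> dyadic q}"
  shows "halve_exponents f \<in> monoid_algebra gen_monoid"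
proof -
  have "Poly_Mapping.keys (halve_exponents f) \<subseteq> gen_monoid"
  proof
    fix s assume "s \<in> Poly_Mapping.keys (halve_exponents f)"
    hence "0 \<le> 2 * s" "dyadic (2 * s)" using assms by (auto simp: keys_halve_exponents)
    hence "0 \<le> s" "dyadic s" by (simp_all add: dyadic_half)
    thus "s \<in> gen_monoid" by (rule nonneg_dyadic_mem_gen_monoid)
  qed
  thus ?thesis by (simp add: monoid_algebra_def)
qed

lemma keys_trinomial_nonneg_dyadic: "Poly_Mapping.keys trinomial \<subseteq> {q. 0 \<le> q \<and> dyadic q}"
  using keys_trinomial dyadic_of_int[of 0] dyadic_of_int[of 1] dyadic_of_int[of 2] by auto

lemma keys_trinomial_grid: "N > 0 \<Longrightarrow> Poly_Mapping.keys trinomial \<subseteq> grid N"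
  using keys_trinomial of_nat_in_grid[of N 0] of_nat_in_grid[of N 1] of_nat_in_grid[of N 2] by auto

lemma trinomial_mem_monoid_algebra: "trinomial \<in> monoid_algebra gen_monoid"
  unfolding monoid_algebra_def
  using keys_trinomial_nonneg_dyadic nonneg_dyadic_mem_gen_monoid by auto

lemma trinomial_nonzero: "trinomial \<noteq> 0"
proof -
  have "Poly_Mapping.lookup trinomial 0 = 1"
    by (simp add: trinomial_def lookup_add lookup_single)
  thus ?thesis by auto
qed

lemma trinomial_not_unit: "\<not> ma_unit gen_monoid trinomial"
proof
  assume "ma_unit gen_monoid trinomial"
  then obtain k where k: "k \<in> monoid_algebra gen_monoid" "trinomial * k = 1"
    by (auto simp: ma_unit_def)
  obtain c where c: "Poly_Mapping.keys k \<subseteq> grid (6 ^ c)"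
    using finite_subset_six_adic_grid[of "Poly_Mapping.keys k"] k(1) gen_monoid_subset_six_adic
    by (auto simp: monoid_algebra_def)
  have "cyclotomic_3pow c ^ (2 ^ c) * grid_poly (6 ^ c) k = 1"
    using k(2) grid_poly_mult[of "6 ^ c" trinomial k] c keys_trinomial_grid[of "6 ^ c"]
    by (simp add: grid_poly_trinomial grid_poly_one)
  hence "is_unit (cyclotomic_3pow c)"
    by (metis dvd_power dvd_trans dvd_triv_left zero_less_numeral zero_less_power)
  thus False using irreducible_not_unit[OF irreducible_cyclotomic_3pow] by blast
qed

lemma divisor_trinomial_keys_dyadic:
  assumes gh: "g * h = trinomial"
    and g: "Poly_Mapping.keys g \<subseteq> six_adic" and h: "Poly_Mapping.keys h \<subseteq> six_adic"
  shows "Poly_Mapping.keys g \<subseteq> {q. 0 \<le> q \<and> dyadic q}"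
proof
  obtain c where c: "Poly_Mapping.keys g \<union> Poly_Mapping.keys h \<subseteq> grid (6 ^ c)"
    using finite_subset_six_adic_grid[of "Poly_Mapping.keys g \<union> Poly_Mapping.keys h"] g h by auto
  have "grid_poly (6 ^ c) g * grid_poly (6 ^ c) h = cyclotomic_3pow c ^ (2 ^ c)"
    using grid_poly_mult[of "6 ^ c" g h] c by (simp add: gh grid_poly_trinomial)
  hence support: "supported_on_multiples (3 ^ c) (grid_poly (6 ^ c) g)"
    by (metis dvd_triv_left supported_on_multiples_dvd_cyclotomic_3pow_power)
  fix s assume s: "s \<in> Poly_Mapping.keys g"
  then obtain n where n: "s = of_nat n / of_nat (6 ^ c)" using c by (auto simp: grid_def)
  have "coeff (grid_poly (6 ^ c) g) n \<noteq> 0"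
    using coeff_grid_poly[of "6 ^ c" g n] c s by (auto simp: n in_keys_iff)
  with support have "3 ^ c dvd n" by (simp add: supported_on_multiples_def)
  then obtain m where "n = 3 ^ c * m" ..
  moreover have "(6::rat) ^ c = 2 ^ c * 3 ^ c" by (simp flip: power_mult_distrib)
  ultimately have "s = of_int (int m) / 2 ^ c" by (simp add: n)
  hence "dyadic s" unfolding dyadic_def by blast
  moreover from \<open>s = of_int (int m) / 2 ^ c\<close> have "0 \<le> s" by simp
  ultimately show "s \<in> {q. 0 \<le> q \<and> dyadic q}" by simp
qed

lemma divisor_trinomial_square:
  assumes "g \<in> monoid_algebra gen_monoid" "h \<in> monoid_algebra gen_monoid" "g * h = trinomial"
  shows "\<exists>k\<in>monoid_algebra gen_monoid. g = k * k"
proof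
  have "Poly_Mapping.keys g \<subseteq> six_adic" "Poly_Mapping.keys h \<subseteq> six_adic"
    using assms(1,2) gen_monoid_subset_six_adic by (auto simp: monoid_algebra_def)
  with assms(3) have "Poly_Mapping.keys g \<subseteq> {q. 0 \<le> q \<and> dyadic q}"
    by (rule divisor_trinomial_keys_dyadic)
  thus "halve_exponents g \<in> monoid_algebra gen_monoid" by (rule halve_exponents_mem_gen_monoid)
  show "g = halve_exponents g * halve_exponents g" by (simp only: halve_exponents_square)
qed

theorem theorem5p4:
  shows "\<exists>M. puiseux_monoid M \<and> atomic_monoid M \<and> \<not> ma_atomic M"
proof (intro exI conjI)
  show "puiseux_monoid gen_monoid" by (rule puiseux_gen_monoid)
  show "atomic_monoid gen_monoid" by (rule atomic_gen_monoid)
  show "\<not> ma_atomic gen_monoid"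
    using puiseux_gen_monoid trinomial_mem_monoid_algebra trinomial_nonzero trinomial_not_unit
      divisor_trinomial_square
    by (rule not_ma_atomic_if_divisors_squares)
qed

end
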